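(* Let $G=(V,E)$ be an undirected graph with $n$ nodes and $m$ edges. Let $H$ be the set of nodes with degree larger than $m^{1/3}$, and $L=V\setminus H$. Orient every edge $\{u,v\}$ from $u$ to $v$ if $\deg(u)\le \deg(v)$ (breaking ties arbitrarily). Let $P$ be the number of directed $2$-paths $u\to v\to w$ with $u\in L$, $v\in H$, $w\in H$ (i.e., the edge $\{u,v\}$ is oriented from $u$ to $v$ and the edge $\{v,w\}$ is oriented from $v$ to $w$). If $P>100\,m^{4/3}\log^2 n$, then $G$ contains at least $P/(100\log^2 n)$ $4$-cycles.
   Context: Graphs are simple, unweighted and undirected; $\deg(v)$ denotes the degree of node $v$ in $G$. A $2$-path is a path $u,v,w$ on three distinct nodes with edges $\{u,v\},\{v,w\}$; $v$ is its center. A $4$-cycle is a cycle on four distinct nodes. $\log$ denotes the logarithm (base 2). *)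

theory Defs
  imports Complex_Main
begin

definition simple_graph :: "'a set \<Rightarrow> ('a \<Rightarrow> 'a \<Rightarrow> bool) \<Rightarrow> bool" where
  "simple_graph V adj \<longleftrightarrow> finite V \<and>
     (\<forall>u v. adj u v \<longrightarrow> u \<in> V \<and> v \<in> V \<and> u \<noteq> v \<and> adj v u)"

definition edges :: "'a set \<Rightarrow> ('a \<Rightarrow> 'a \<Rightarrow> bool) \<Rightarrow> 'a set set" where
  "edges V adj = {{u, v} | u v. u \<in> V \<and> v \<in> V \<and> adj u v}"

definition num_edges :: "'a set \<Rightarrow> ('a \<Rightarrow> 'a \<Rightarrow> bool) \<Rightarrow> nat" where
  "num_edges V adj = card (edges V adj)"

definition deg :: "'a set \<Rightarrow> ('a \<Rightarrow> 'a \<Rightarrow> bool) \<Rightarrow> 'a \<Rightarrow> nat" where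
  "deg V adj v = card {u \<in> V. adj v u}"

definition degree_orientation ::
  "'a set \<Rightarrow> ('a \<Rightarrow> 'a \<Rightarrow> bool) \<Rightarrow> ('a \<Rightarrow> 'a \<Rightarrow> bool) \<Rightarrow> bool" where
  "degree_orientation V adj ori \<longleftrightarrow>
     (\<forall>u v. ori u v \<longrightarrow> adj u v \<and> deg V adj u \<le> deg V adj v) \<and>
     (\<forall>u v. adj u v \<longrightarrow> (ori u v \<longleftrightarrow> \<not> ori v u))"

definition high_nodes :: "'a set \<Rightarrow> ('a \<Rightarrow> 'a \<Rightarrow> bool) \<Rightarrow> 'a set" where
  "high_nodes V adj = {v \<in> V. real (deg V adj v) > real (num_edges V adj) powr (1/3)}"

definition low_nodes :: "'a set \<Rightarrow> ('a \<Rightarrow> 'a \<Rightarrow> bool) \<Rightarrow> 'a set" where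
  "low_nodes V adj = V - high_nodes V adj"

definition LHH_paths ::
  "'a set \<Rightarrow> ('a \<Rightarrow> 'a \<Rightarrow> bool) \<Rightarrow> ('a \<Rightarrow> 'a \<Rightarrow> bool) \<Rightarrow> nat" where
  "LHH_paths V adj ori = card {(u, v, w). u \<in> low_nodes V adj \<and> v \<in> high_nodes V adj \<and>
      w \<in> high_nodes V adj \<and> u \<noteq> v \<and> v \<noteq> w \<and> u \<noteq> w \<and> ori u v \<and> ori v w}"

text \<open>4-cycles, counted as subgraphs (each identified by its set of four edges).\<close>
definition four_cycles :: "'a set \<Rightarrow> ('a \<Rightarrow> 'a \<Rightarrow> bool) \<Rightarrow> 'a set set set" where
  "four_cycles V adj = {{{a, b}, {b, c}, {c, d}, {d, a}} | a b c d.
      a \<in> V \<and> b \<in> V \<and> c \<in> V \<and> d \<in> V \<and> distinct [a, b, c, d] \<and>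
      adj a b \<and> adj b c \<and> adj c d \<and> adj d a}"

end

theory Submission
  imports Defs "HOL-Analysis.Convex" "HOL-Analysis.Harmonic_Numbers"
begin

text \<open>
  Charge each counted path u \<rightarrow> v \<rightarrow> w to the arc v \<rightarrow> w between high-degree
  nodes; an arc receives at most deg v paths.  Splitting the arcs by the levels k \<le> deg v
  of their tails, the arcs of level k run inside the set S of high nodes of degree at
  least k, which has at most 2m/k and at most 2 m^(2/3) elements.  Applying Cauchy--Schwarz
  twice, as in the Kovari--Sos--Turan theorem, bounds the number of arcs inside S by
  |S| (1 + |S|^(1/2) + (16 C)^(1/4)), where C is the number of 4-cycles.  Summing over k
  gives P \<le> 4 m log n (3 m^(1/3) + (16 C)^(1/4)) through the harmonic series.  When P
  exceeds 100 m^(4/3) log^2 n the 4-cycle term must dominate, and this forces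
  C \<ge> P / (100 log^2 n).
\<close>

lemma card_le_mult_card_image:
  assumes "finite A" and "\<And>y. y \<in> f ` A \<Longrightarrow> card {x \<in> A. f x = y} \<le> k"
  shows "card A \<le> k * card (f ` A)"
proof -
  have "A = (\<Union>y \<in> f ` A. {x \<in> A. f x = y})" by auto
  then have "card A \<le> (\<Sum>y \<in> f ` A. card {x \<in> A. f x = y})"
    using card_UN_le[of "f ` A" "\<lambda>y. {x \<in> A. f x = y}"] assms(1) by simp
  also have "\<dots> \<le> (\<Sum>y \<in> f ` A. k)" using assms(2) by (intro sum_mono) auto
  finally show ?thesis by (simp add: mult.commute)
qed

lemma sum_eq_sum_card_ge:
  fixes f :: "'a \<Rightarrow> nat"
  assumes "finite A" and "\<And>x. x \<in> A \<Longrightarrow> f x \<le> n"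
  shows "(\<Sum>x \<in> A. f x) = (\<Sum>k = 1..n. card {x \<in> A. k \<le> f x})"
proof -
  have "f x = (\<Sum>k = 1..n. if k \<le> f x then 1 else 0)" if "x \<in> A" for x
  proof -
    have "{k \<in> {1..n}. k \<le> f x} = {1..f x}" using assms(2)[OF that] by auto
    then show ?thesis by (simp add: sum.inter_filter[symmetric])
  qed
  then have "(\<Sum>x \<in> A. f x) = (\<Sum>x \<in> A. \<Sum>k = 1..n. if k \<le> f x then 1 else 0)"
    by (intro sum.cong) auto
  also have "\<dots> = (\<Sum>k = 1..n. \<Sum>x \<in> A. if k \<le> f x then 1 else 0)" by (rule sum.swap)
  also have "\<dots> = (\<Sum>k = 1..n. card {x \<in> A. k \<le> f x})"
    using assms(1) by (simp add: sum.inter_filter[symmetric])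
  finally show ?thesis .
qed

lemma card_pairs_eq_sum_of_bool:
  assumes "finite A" and "finite B"
  shows "real (card {(a, b). a \<in> A \<and> b \<in> B \<and> R a b}) = (\<Sum>a \<in> A. \<Sum>b \<in> B. of_bool (R a b))"
proof -
  have "{(a, b). a \<in> A \<and> b \<in> B \<and> R a b} = (A \<times> B) \<inter> {x. case x of (a, b) \<Rightarrow> R a b}"
    by auto
  then have "real (card {(a, b). a \<in> A \<and> b \<in> B \<and> R a b})
      = (\<Sum>x \<in> A \<times> B. of_bool (case x of (a, b) \<Rightarrow> R a b))"
    using assms by (simp only: sum_of_bool_eq finite_cartesian_product)
  also have "\<dots> = (\<Sum>a \<in> A. \<Sum>b \<in> B. of_bool (R a b))"
    by (simp only: sum.cartesian_product split_def prod.case fst_conv snd_conv)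
  finally show ?thesis .
qed

lemma card_quadruples_eq_sum_of_bool:
  assumes "finite S"
  shows "real (card {(a, b, c, d). a \<in> S \<and> b \<in> S \<and> c \<in> S \<and> d \<in> S \<and> R a b c d})
    = (\<Sum>a \<in> S. \<Sum>b \<in> S. \<Sum>c \<in> S. \<Sum>d \<in> S. of_bool (R a b c d))"
proof -
  have "{(a, b, c, d). a \<in> S \<and> b \<in> S \<and> c \<in> S \<and> d \<in> S \<and> R a b c d}
      = (S \<times> S \<times> S \<times> S) \<inter> {x. case x of (a, b, c, d) \<Rightarrow> R a b c d}"
    by auto
  then have "real (card {(a, b, c, d). a \<in> S \<and> b \<in> S \<and> c \<in> S \<and> d \<in> S \<and> R a b c d})
      = (\<Sum>x \<in> S \<times> S \<times> S \<times> S. of_bool (case x of (a, b, c, d) \<Rightarrow> R a b c d))"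
    using assms by (simp only: sum_of_bool_eq finite_cartesian_product)
  also have "\<dots> = (\<Sum>a \<in> S. \<Sum>b \<in> S. \<Sum>c \<in> S. \<Sum>d \<in> S. of_bool (R a b c d))"
    by (simp only: sum.cartesian_product split_def prod.case fst_conv snd_conv)
  finally show ?thesis .
qed

lemma sum_of_bool_split_diagonal:
  assumes "finite A"
  shows "(\<Sum>x \<in> A. \<Sum>y \<in> A. of_bool (P x y) :: real)
    = (\<Sum>x \<in> A. \<Sum>y \<in> A. of_bool (x \<noteq> y \<and> P x y)) + (\<Sum>x \<in> A. of_bool (P x x))"
proof -
  have "(\<Sum>y \<in> A. of_bool (P x y) :: real)
      = (\<Sum>y \<in> A. of_bool (x \<noteq> y \<and> P x y)) + of_bool (P x x)" if "x \<in> A" for x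
  proof -
    have "(\<Sum>y \<in> A. of_bool (P x y) :: real)
        = (\<Sum>y \<in> A. of_bool (x \<noteq> y \<and> P x y) + (if y = x then of_bool (P x x) else 0))"
      by (intro sum.cong) auto
    then show ?thesis using assms that by (simp add: sum.distrib)
  qed
  then show ?thesis by (simp add: sum.distrib)
qed

lemma incidences_squared_le:
  fixes R :: "'a \<Rightarrow> 'b \<Rightarrow> bool"
  assumes "finite A"
  shows "(\<Sum>b \<in> B. \<Sum>a \<in> A. of_bool (R a b))\<^sup>2 \<le> real (card B) *
    ((\<Sum>b \<in> B. \<Sum>a \<in> A. \<Sum>a' \<in> A. of_bool (a \<noteq> a' \<and> R a b \<and> R a' b))
      + (\<Sum>b \<in> B. \<Sum>a \<in> A. of_bool (R a b)))"
proof -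
  have "(\<Sum>a \<in> A. of_bool (R a b) :: real)\<^sup>2
      = (\<Sum>a \<in> A. \<Sum>a' \<in> A. of_bool (a \<noteq> a' \<and> R a b \<and> R a' b)) + (\<Sum>a \<in> A. of_bool (R a b))"
    for b
    using sum_of_bool_split_diagonal[OF assms, of "\<lambda>a a'. R a b \<and> R a' b"]
    by (simp add: power2_eq_square sum_product of_bool_conj)
  then show ?thesis
    using sum_squared_le_sum_of_squares[of "\<lambda>b. \<Sum>a \<in> A. of_bool (R a b)" B]
    by (simp add: sum.distrib mult.commute)
qed

section \<open>A Kovari--Sos--Turan bound\<close>

lemma le_add_sqrt_of_square_le:
  fixes x a b :: real
  assumes "0 \<le> a" and "0 \<le> b" and "x\<^sup>2 \<le> a * x + b"
  shows "x \<le> a + sqrt b"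
proof (rule ccontr)
  assume "\<not> x \<le> a + sqrt b"
  then have "sqrt b < x - a" and "sqrt b < x" using assms(1) by auto
  moreover have "0 \<le> sqrt b" using assms(2) by simp
  ultimately have "sqrt b * sqrt b < x * (x - a)"
    by (intro mult_strict_mono) linarith+
  then show False using assms by (simp add: power2_eq_square algebra_simps)
qed

lemma le_of_iterated_square_bounds:
  fixes e h X Q q :: real
  assumes "0 \<le> h" and "0 \<le> X" and "0 \<le> Q" and "0 \<le> q"
    and "e\<^sup>2 \<le> h * (X + e)" and "X\<^sup>2 \<le> h\<^sup>2 * (Q + X)" and "Q \<le> q ^ 4"
  shows "e \<le> h * (1 + sqrt h + q)"
proof -
  have "e\<^sup>2 \<le> h * e + h * X" and "X\<^sup>2 \<le> h\<^sup>2 * X + h\<^sup>2 * Q"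
    using assms(5,6) by (simp_all only: distrib_left add.commute)
  then have e_le: "e \<le> h + sqrt (h * X)" and X_le: "X \<le> h\<^sup>2 + sqrt (h\<^sup>2 * Q)"
    using assms(1-3) by (simp_all add: le_add_sqrt_of_square_le)
  have "sqrt Q \<le> q\<^sup>2"
    using assms(7) by (intro real_le_lsqrt) (simp_all flip: power_mult)
  then have "sqrt (h\<^sup>2 * Q) \<le> h * q\<^sup>2"
    using assms(1) by (simp add: real_sqrt_mult mult_left_mono)
  then have "h * X \<le> h * (h\<^sup>2 + h * q\<^sup>2)"
    using X_le assms(1) by (intro mult_left_mono) auto
  also have "\<dots> = h\<^sup>2 * (h + q\<^sup>2)"
    by (simp add: power2_eq_square algebra_simps)
  finally have "sqrt (h * X) \<le> sqrt (h\<^sup>2 * (h + q\<^sup>2))"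
    by (rule real_sqrt_le_mono)
  also have "\<dots> = h * sqrt (h + q\<^sup>2)"
    using assms(1) by (simp add: real_sqrt_mult)
  also have "\<dots> \<le> h * (sqrt h + q)"
    using assms(1,4) sqrt_add_le_add_sqrt[of h "q\<^sup>2"] by (simp add: mult_left_mono)
  finally show ?thesis using e_le by (simp add: algebra_simps)
qed

lemma card_rel_le_by_rectangles:
  fixes r :: "'a \<Rightarrow> 'a \<Rightarrow> bool" and q :: real
  assumes "finite S" and "0 \<le> q"
    and "real (card {(v, v', w, w'). v \<in> S \<and> v' \<in> S \<and> w \<in> S \<and> w' \<in> S \<and>
      v \<noteq> v' \<and> w \<noteq> w' \<and> r v w \<and> r v w' \<and> r v' w \<and> r v' w'}) \<le> q ^ 4"
  shows "real (card {(v, w). v \<in> S \<and> w \<in> S \<and> r v w}) \<le> card S * (1 + sqrt (card S) + q)"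
proof -
  define h where "h = real (card S)"
  define e where "e = (\<Sum>w \<in> S. \<Sum>v \<in> S. of_bool (r v w) :: real)"
  define X where "X = (\<Sum>w \<in> S. \<Sum>v \<in> S. \<Sum>v' \<in> S. of_bool (v \<noteq> v' \<and> r v w \<and> r v' w) :: real)"
  define Q where "Q = (\<Sum>v \<in> S. \<Sum>v' \<in> S. \<Sum>w \<in> S. \<Sum>w' \<in> S.
    of_bool (v \<noteq> v' \<and> w \<noteq> w' \<and> r v w \<and> r v w' \<and> r v' w \<and> r v' w') :: real)"
  have h0: "0 \<le> h" and X0: "0 \<le> X" and Q0: "0 \<le> Q"
    unfolding h_def X_def Q_def by (auto intro!: sum_nonneg)
  have card_eq: "real (card {(v, w). v \<in> S \<and> w \<in> S \<and> r v w}) = e"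
    unfolding e_def card_pairs_eq_sum_of_bool[OF assms(1,1)] by (rule sum.swap)
  have "Q \<le> q ^ 4"
    using assms(3) unfolding Q_def card_quadruples_eq_sum_of_bool[OF assms(1)] .
  \<comment> \<open>Cauchy--Schwarz over the endpoints w, then over the pairs (v, v')\<close>
  have "e\<^sup>2 \<le> h * (X + e)"
    using incidences_squared_le[OF assms(1), of r S] unfolding e_def X_def h_def .
  moreover have "X\<^sup>2 \<le> h\<^sup>2 * (Q + X)"
  proof -
    let ?R = "\<lambda>w p. fst p \<noteq> snd p \<and> r (fst p) w \<and> r (snd p) w"
    have "X = (\<Sum>v \<in> S. \<Sum>w \<in> S. \<Sum>v' \<in> S. of_bool (v \<noteq> v' \<and> r v w \<and> r v' w))"
      unfolding X_def by (rule sum.swap)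
    also have "\<dots> = (\<Sum>v \<in> S. \<Sum>v' \<in> S. \<Sum>w \<in> S. of_bool (v \<noteq> v' \<and> r v w \<and> r v' w))"
      by (intro sum.cong refl sum.swap)
    also have "\<dots> = (\<Sum>p \<in> S \<times> S. \<Sum>w \<in> S. of_bool (?R w p))"
      unfolding sum.cartesian_product' by (simp only: fst_conv snd_conv)
    finally have X_eq: "X = (\<Sum>p \<in> S \<times> S. \<Sum>w \<in> S. of_bool (?R w p))" .
    have Q_eq: "Q = (\<Sum>p \<in> S \<times> S. \<Sum>w \<in> S. \<Sum>w' \<in> S. of_bool (w \<noteq> w' \<and> ?R w p \<and> ?R w' p))"
      unfolding Q_def sum.cartesian_product' fst_conv snd_conv by (intro sum.cong refl) auto
    have "real (card (S \<times> S)) = h\<^sup>2"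
      unfolding h_def by (simp add: card_cartesian_product power2_eq_square)
    then show ?thesis
      using incidences_squared_le[OF assms(1), of ?R "S \<times> S"] unfolding X_eq Q_eq by simp
  qed
  ultimately show ?thesis
    using le_of_iterated_square_bounds[OF h0 X0 Q0 assms(2) _ _ \<open>Q \<le> q ^ 4\<close>] card_eq
    unfolding h_def by simp
qed

lemma sqrt_sqrt_power4: "0 \<le> x \<Longrightarrow> sqrt (sqrt x) ^ 4 = x"
proof -
  assume "0 \<le> x"
  have "sqrt (sqrt x) ^ 4 = ((sqrt (sqrt x))\<^sup>2)\<^sup>2" by simp
  also have "\<dots> = x" using \<open>0 \<le> x\<close> by simp
  finally show ?thesis .
qed

lemma powr_one_third_cube:
  fixes x :: real
  assumes "0 \<le> x"
  shows "(x powr (1/3)) ^ 3 = x"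
proof (cases "x = 0")
  case False
  then have "(x powr (1/3)) ^ 3 = (x powr (1/3)) powr (real 3)"
    using assms by (simp add: powr_realpow)
  also have "\<dots> = x" using assms False by (simp add: powr_powr)
  finally show ?thesis .
qed simp

lemma powr_four_thirds:
  fixes x :: real
  assumes "0 \<le> x"
  shows "x powr (4/3) = x * x powr (1/3)"
proof (cases "x = 0")
  case False
  have "x powr (4/3) = x powr (1 + 1/3)" by simp
  also have "\<dots> = x powr 1 * x powr (1/3)" by (rule powr_add)
  also have "\<dots> = x * x powr (1/3)" using assms False by simp
  finally show ?thesis .
qed simp

lemma harm_le_one_plus_ln: "1 \<le> n \<Longrightarrow> harm n \<le> 1 + ln (real n)"
proof (induction n rule: nat_induct_at_least)
  case base
  then show ?case by (simp add: harm_def)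
next
  case (Suc n)
  have "ln (real n / real (Suc n)) \<le> real n / real (Suc n) - 1"
    using Suc.hyps by (intro ln_le_minus_one) simp
  then have "inverse (real (Suc n)) \<le> ln (real (Suc n)) - ln (real n)"
    using Suc.hyps by (simp add: ln_div field_simps)
  then show ?case using Suc.IH by (simp add: harm_Suc)
qed

lemma harm_le_twice_log2:
  assumes "2 \<le> n"
  shows "harm n \<le> 2 * log 2 (real n)"
proof -
  have "1 \<le> log 2 (real n)" using assms by (subst le_log_iff) auto
  moreover have "ln (real n) \<le> log 2 (real n)"
  proof -
    have "ln 2 \<le> (1::real)" using ln_le_minus_one[of 2] by simp
    moreover have "0 \<le> ln (real n)" using assms by simp
    ultimately have "ln (real n) * ln 2 \<le> ln (real n)" by (simp add: mult_left_le)
    then show ?thesis by (simp add: log_def field_simps)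
  qed
  ultimately show ?thesis using harm_le_one_plus_ln[of n] assms by linarith
qed

lemma four_cycle_term_dominates:
  fixes P m \<mu> L q :: real
  assumes "1 \<le> L" and "0 \<le> m" and "0 \<le> \<mu>"
    and "P \<le> 4 * m * L * (3 * \<mu> + q)" and "100 * (m * \<mu>) * L\<^sup>2 < P"
  shows "22 * P \<le> 100 * m * L * q"
proof -
  have "m * \<mu> * L \<le> m * \<mu> * L\<^sup>2"
    using assms(1-3) by (intro mult_left_mono) (auto simp: power2_eq_square)
  then have "12 * m * \<mu> * L < 12 / 100 * P" using assms(5) by linarith
  then show ?thesis using assms(4) by (simp add: algebra_simps)
qed

text \<open>
  By the previous lemma q \<ge> 0.22 P / (m L), while the lower bound on P and m = \<mu>^3
  give P^3 \<ge> 10^6 m^4 L^6; so q^4 \<le> 16 C is more than enough.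
\<close>

lemma four_cycle_count_arith:
  fixes P m \<mu> L q C :: real
  assumes L: "1 \<le> L" and \<mu>: "0 \<le> \<mu>" "m = \<mu> ^ 3"
    and upper: "P \<le> 4 * m * L * (3 * \<mu> + q)" and lower: "100 * (m * \<mu>) * L\<^sup>2 < P"
    and q: "q ^ 4 \<le> 16 * C"
  shows "P / (100 * L\<^sup>2) \<le> C"
proof -
  have m0: "0 \<le> m" using \<mu> by simp
  have q_lower: "22 * P \<le> 100 * m * L * q"
    using four_cycle_term_dominates[OF L m0 \<mu>(1) upper lower] .
  have P0: "0 < P" using lower m0 \<mu> by (smt (verit) mult_nonneg_nonneg zero_le_power2)
  have "(22 * P) ^ 4 \<le> (100 * m * L * q) ^ 4"
    using q_lower P0 by (intro power_mono) auto
  also have "\<dots> = 100000000 * (m ^ 4 * L ^ 4) * q ^ 4" by (simp add: power_mult_distrib)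
  also have "\<dots> \<le> 100000000 * (m ^ 4 * L ^ 4) * (16 * C)"
    using q by (intro mult_left_mono) auto
  finally have C_lower: "234256 * P ^ 4 \<le> 1600000000 * (m ^ 4 * L ^ 4) * C" by simp
  have cube: "(m * \<mu>) ^ 3 = m ^ 4"
    using \<mu>(2) by (simp add: power_mult_distrib eval_nat_numeral)
  have "1000000 * (m ^ 4 * L ^ 4) * L\<^sup>2 = 100 ^ 3 * (m * \<mu>) ^ 3 * (L\<^sup>2) ^ 3"
    unfolding cube by (simp add: eval_nat_numeral)
  also have "\<dots> = (100 * (m * \<mu>) * L\<^sup>2) ^ 3" by (simp only: power_mult_distrib)
  also have "\<dots> \<le> P ^ 3"
    using lower m0 \<mu> L by (intro power_mono) auto
  finally have P_cube: "1000000 * (m ^ 4 * L ^ 4) * L\<^sup>2 \<le> P ^ 3" .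
  have m_pos: "0 < m"
    using upper P0 m0 by (cases "m = 0") auto
  have M0: "0 < m ^ 4 * L ^ 4" using m_pos L by simp
  have "234256 * P * (1000000 * (m ^ 4 * L ^ 4) * L\<^sup>2) \<le> 234256 * P * P ^ 3"
    using P_cube P0 by (intro mult_left_mono) auto
  also have "\<dots> = 234256 * P ^ 4" by (simp add: power_numeral_reduce)
  finally have "(m ^ 4 * L ^ 4) * (234256000000 * (P * L\<^sup>2)) \<le> (m ^ 4 * L ^ 4) * (1600000000 * C)"
    using C_lower by (simp add: algebra_simps)
  then have "234256000000 * (P * L\<^sup>2) \<le> 1600000000 * C"
    using M0 by (rule mult_left_le_imp_le)
  moreover have "1 \<le> L\<^sup>2" using L by (simp add: one_le_power)
  then have "P / (100 * L\<^sup>2) \<le> P" and "P \<le> P * L\<^sup>2"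
    using P0 mult_left_mono[of 1 "100 * L\<^sup>2" P] mult_left_mono[of 1 "L\<^sup>2" P]
    by (simp_all add: divide_le_eq)
  ultimately show ?thesis using P0 by linarith
qed

section \<open>Four-cycles and degrees\<close>

lemma four_cycle_edges_eq_imp_eq:
  assumes "distinct [a, b, c, d]" and "distinct [a, b, c', d']"
    and "{{a, b}, {b, c}, {c, d}, {d, a}} = {{a, b}, {b, c'}, {c', d'}, {d', a}}"
  shows "c = c' \<and> d = d'"
proof
  have "{b, c} \<in> {{a, b}, {b, c}, {c, d}, {d, a}}" by simp
  then have "{b, c} \<in> {{a, b}, {b, c'}, {c', d'}, {d', a}}" using assms(3) by simp
  then show "c = c'" using assms(1,2) by (auto simp: doubleton_eq_iff)
  have "{d, a} \<in> {{a, b}, {b, c}, {c, d}, {d, a}}" by simp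
  then have "{d, a} \<in> {{a, b}, {b, c'}, {c', d'}, {d', a}}" using assms(3) by simp
  then show "d = d'" using assms(1,2) by (auto simp: doubleton_eq_iff)
qed

lemma card_four_cycle_parametrisations_le:
  assumes "\<And>v v' w w'. (v, v', w, w') \<in> F \<Longrightarrow>
    distinct [v, w, v', w'] \<and> {{v, w}, {w, v'}, {v', w'}, {w', v}} = y"
  shows "card F \<le> 16"
proof (cases "F = {}")
  case False
  then obtain v0 v0' w0 w0' where in_F: "(v0, v0', w0, w0') \<in> F" by (metis ex_in_conv prod_cases4)
  have vertices: "{v, w, v', w'} = \<Union> y" if "(v, v', w, w') \<in> F" for v v' w w'
    using assms[OF that] by auto
  have "inj_on (\<lambda>(v, v', w, w'). (v, w)) F"
  proof (rule inj_onI)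
    fix x1 x2
    assume "x1 \<in> F" "x2 \<in> F" and "(\<lambda>(v, v', w, w'). (v, w)) x1 = (\<lambda>(v, v', w, w'). (v, w)) x2"
    moreover obtain v w a1 b1 a2 b2 where "x1 = (v, a1, w, b1)" and "x2 = (v, a2, w, b2)"
      using calculation(3) by (cases x1, cases x2) auto
    ultimately show "x1 = x2"
      using assms four_cycle_edges_eq_imp_eq[of v w a1 b1 a2 b2] by metis
  qed
  moreover have "(\<lambda>(v, v', w, w'). (v, w)) ` F \<subseteq> \<Union> y \<times> \<Union> y"
    using vertices by fastforce
  ultimately have "card F \<le> card (\<Union> y \<times> \<Union> y)"
    by (intro card_inj_on_le) (auto simp flip: vertices[OF in_F])
  also have "\<dots> \<le> 4 * 4"
    unfolding card_cartesian_product vertices[OF in_F, symmetric]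
    using card_length[of "[v0, w0, v0', w0']"] by (intro mult_le_mono) simp_all
  finally show ?thesis by simp
qed simp

lemma finite_four_cycles: "finite V \<Longrightarrow> finite (four_cycles V adj)"
  by (rule finite_subset[of _ "Pow (Pow V)"]) (auto simp: four_cycles_def)

lemma card_rectangles_le_four_cycles:
  assumes "simple_graph V adj"
  shows "card {(v, v', w, w'). v \<in> V \<and> v' \<in> V \<and> w \<in> V \<and> w' \<in> V \<and>
      v \<noteq> v' \<and> w \<noteq> w' \<and> adj v w \<and> adj v w' \<and> adj v' w \<and> adj v' w'}
    \<le> 16 * card (four_cycles V adj)"
    (is "card ?T \<le> _")
proof -
  define f where "f = (\<lambda>(v::'a, v'::'a, w::'a, w'::'a). {{v, w}, {w, v'}, {v', w'}, {w', v}})"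
  have finite_V: "finite V" using assms unfolding simple_graph_def by simp
  have adj: "adj u v \<Longrightarrow> u \<in> V \<and> v \<in> V \<and> u \<noteq> v \<and> adj v u" for u v
    using assms unfolding simple_graph_def by blast
  have cycle: "distinct [v, w, v', w'] \<and> adj v w \<and> adj w v' \<and> adj v' w' \<and> adj w' v"
    if "(v, v', w, w') \<in> ?T" for v v' w w'
  proof -
    have "v \<noteq> v'" "w \<noteq> w'" "adj v w" "adj v w'" "adj v' w" "adj v' w'" using that by auto
    then show ?thesis using adj[of v w] adj[of v w'] adj[of v' w] adj[of v' w'] by auto
  qed
  have "card ?T \<le> 16 * card (f ` ?T)"
  proof (rule card_le_mult_card_image)
    have "?T \<subseteq> V \<times> V \<times> V \<times> V" by auto
    then show "finite ?T" by (rule finite_subset) (simp add: finite_V)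
    show "card {t \<in> ?T. f t = y} \<le> 16" for y
    proof (rule card_four_cycle_parametrisations_le)
      fix v v' w w' assume "(v, v', w, w') \<in> {t \<in> ?T. f t = y}"
      then have t: "(v, v', w, w') \<in> ?T" and "f (v, v', w, w') = y" by simp_all
      then show "distinct [v, w, v', w'] \<and> {{v, w}, {w, v'}, {v', w'}, {w', v}} = y"
        using cycle[OF t] unfolding f_def by simp
    qed
  qed
  also have "card (f ` ?T) \<le> card (four_cycles V adj)"
  proof (intro card_mono finite_four_cycles finite_V subsetI)
    fix c assume "c \<in> f ` ?T"
    then obtain v v' w w' where t: "(v, v', w, w') \<in> ?T" and c: "c = f (v, v', w, w')" by auto
    have "v \<in> V" "v' \<in> V" "w \<in> V" "w' \<in> V" using t by simp_all
    then show "c \<in> four_cycles V adj"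
      unfolding four_cycles_def c f_def using cycle[OF t] by blast
  qed
  finally show ?thesis by simp
qed

lemma card_sub_rectangles_le_four_cycles:
  assumes "simple_graph V adj" and "S \<subseteq> V" and "\<And>v w. r v w \<Longrightarrow> adj v w"
  shows "card {(v, v', w, w'). v \<in> S \<and> v' \<in> S \<and> w \<in> S \<and> w' \<in> S \<and>
      v \<noteq> v' \<and> w \<noteq> w' \<and> r v w \<and> r v w' \<and> r v' w \<and> r v' w'}
    \<le> 16 * card (four_cycles V adj)"
proof -
  have "finite V" using assms(1) unfolding simple_graph_def by simp
  then have "card {(v, v', w, w'). v \<in> S \<and> v' \<in> S \<and> w \<in> S \<and> w' \<in> S \<and>
      v \<noteq> v' \<and> w \<noteq> w' \<and> r v w \<and> r v w' \<and> r v' w \<and> r v' w'}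
    \<le> card {(v, v', w, w'). v \<in> V \<and> v' \<in> V \<and> w \<in> V \<and> w' \<in> V \<and>
      v \<noteq> v' \<and> w \<noteq> w' \<and> adj v w \<and> adj v w' \<and> adj v' w \<and> adj v' w'}"
    using assms(2,3) by (intro card_mono[OF finite_subset[of _ "V \<times> V \<times> V \<times> V"]]) auto
  also have "\<dots> \<le> 16 * card (four_cycles V adj)" by (rule card_rectangles_le_four_cycles[OF assms(1)])
  finally show ?thesis .
qed

lemma finite_edges: "finite V \<Longrightarrow> finite (edges V adj)"
  by (rule finite_subset[of _ "Pow V"]) (auto simp: edges_def)

lemma sum_deg_le_twice_num_edges:
  assumes "simple_graph V adj" and "S \<subseteq> V"
  shows "(\<Sum>v \<in> S. deg V adj v) \<le> 2 * num_edges V adj"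
proof -
  have finite_V: "finite V" using assms(1) unfolding simple_graph_def by simp
  define D where "D = Sigma V (\<lambda>v. {u \<in> V. adj v u})"
  have "(\<Sum>v \<in> S. deg V adj v) \<le> (\<Sum>v \<in> V. deg V adj v)"
    using assms(2) finite_V by (intro sum_mono2) auto
  also have "\<dots> = card D" unfolding D_def deg_def using finite_V by simp
  also have "\<dots> \<le> 2 * card ((\<lambda>p. {fst p, snd p}) ` D)"
  proof (rule card_le_mult_card_image)
    show "finite D" unfolding D_def using finite_V by auto
    fix y assume "y \<in> (\<lambda>p. {fst p, snd p}) ` D"
    then obtain a b where "y = {a, b}" by auto
    then have "{x \<in> D. {fst x, snd x} = y} \<subseteq> {(a, b), (b, a)}"
      by (auto simp: doubleton_eq_iff)
    then have "card {x \<in> D. {fst x, snd x} = y} \<le> card {(a, b), (b, a)}"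
      by (intro card_mono) auto
    also have "\<dots> \<le> 2" using card_length[of "[(a, b), (b, a)]"] by simp
    finally show "card {x \<in> D. {fst x, snd x} = y} \<le> 2" .
  qed
  also have "card ((\<lambda>p. {fst p, snd p}) ` D) \<le> num_edges V adj"
  proof (unfold num_edges_def, intro card_mono finite_edges finite_V)
    show "(\<lambda>p. {fst p, snd p}) ` D \<subseteq> edges V adj" unfolding D_def edges_def by fastforce
  qed
  finally show ?thesis by simp
qed

lemma card_mult_le_twice_num_edges:
  assumes "simple_graph V adj" and "S \<subseteq> V" and "\<And>v. v \<in> S \<Longrightarrow> x \<le> real (deg V adj v)"
  shows "real (card S) * x \<le> 2 * real (num_edges V adj)"
proof -
  have "real (card S) * x = (\<Sum>v \<in> S. x)" by simp
  also have "\<dots> \<le> (\<Sum>v \<in> S. real (deg V adj v))" using assms(3) by (rule sum_mono)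
  also have "\<dots> \<le> 2 * real (num_edges V adj)"
    using sum_deg_le_twice_num_edges[OF assms(1,2)] by (simp flip: of_nat_sum)
  finally show ?thesis .
qed

lemma card_high_nodes_le:
  assumes "simple_graph V adj" and "0 < num_edges V adj"
  shows "real (card (high_nodes V adj)) \<le> 2 * (real (num_edges V adj) powr (1/3))\<^sup>2"
proof -
  define \<mu> where "\<mu> = real (num_edges V adj) powr (1/3)"
  have "0 < \<mu>" unfolding \<mu>_def using assms(2) by simp
  have "real (card (high_nodes V adj)) * \<mu> \<le> 2 * real (num_edges V adj)"
    using assms(1) by (rule card_mult_le_twice_num_edges)
      (auto simp: high_nodes_def \<mu>_def less_imp_le)
  also have "\<dots> = 2 * \<mu> ^ 3"
    unfolding \<mu>_def using powr_one_third_cube[of "real (num_edges V adj)"] by simp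
  also have "\<dots> = 2 * \<mu>\<^sup>2 * \<mu>" by (simp add: power2_eq_square power3_eq_cube)
  finally show ?thesis using \<open>0 < \<mu>\<close> unfolding \<mu>_def by simp
qed

lemma deg_le_card: "finite V \<Longrightarrow> deg V adj v \<le> card V"
  unfolding deg_def by (intro card_mono) auto

section \<open>Paths through high-degree nodes\<close>

definition high_arcs :: "'a set \<Rightarrow> ('a \<Rightarrow> 'a \<Rightarrow> bool) \<Rightarrow> ('a \<Rightarrow> 'a \<Rightarrow> bool) \<Rightarrow> ('a \<times> 'a) set"
  where "high_arcs V adj ori = {(v, w). v \<in> high_nodes V adj \<and> w \<in> high_nodes V adj \<and> ori v w}"

lemma finite_high_arcs: "finite V \<Longrightarrow> finite (high_arcs V adj ori)"
  by (rule finite_subset[of _ "V \<times> V"]) (auto simp: high_arcs_def high_nodes_def)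

lemma LHH_paths_le_sum_deg:
  assumes "simple_graph V adj" and "degree_orientation V adj ori"
  shows "LHH_paths V adj ori \<le> (\<Sum>p \<in> high_arcs V adj ori. deg V adj (fst p))"
proof -
  let ?T = "{(u, v, w). u \<in> low_nodes V adj \<and> v \<in> high_nodes V adj \<and> w \<in> high_nodes V adj \<and>
    u \<noteq> v \<and> v \<noteq> w \<and> u \<noteq> w \<and> ori u v \<and> ori v w}"
  let ?paths_through = "\<lambda>p. (\<lambda>u. (u, fst p, snd p)) ` {u \<in> V. adj (fst p) u}"
  have finite_V: "finite V" using assms(1) unfolding simple_graph_def by simp
  have "?T \<subseteq> (\<Union>p \<in> high_arcs V adj ori. ?paths_through p)"
  proof
    fix t assume "t \<in> ?T"
    then obtain u v w where t: "t = (u, v, w)" and "v \<in> high_nodes V adj" "w \<in> high_nodes V adj"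
      and "ori u v" "ori v w"
      by auto
    then have "(v, w) \<in> high_arcs V adj ori" by (simp add: high_arcs_def)
    moreover have "u \<in> V \<and> adj v u"
      using assms \<open>ori u v\<close> unfolding simple_graph_def degree_orientation_def by blast
    ultimately show "t \<in> (\<Union>p \<in> high_arcs V adj ori. ?paths_through p)"
      unfolding t by (intro UN_I[of "(v, w)"]) auto
  qed
  then have "card ?T \<le> card (\<Union>p \<in> high_arcs V adj ori. ?paths_through p)"
    using finite_V by (intro card_mono finite_UN_I finite_high_arcs) auto
  also have "\<dots> \<le> (\<Sum>p \<in> high_arcs V adj ori. card (?paths_through p))"
    using finite_V by (intro card_UN_le finite_high_arcs)
  also have "\<dots> \<le> (\<Sum>p \<in> high_arcs V adj ori. deg V adj (fst p))"
    unfolding deg_def using finite_V by (intro sum_mono card_image_le) auto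
  finally show ?thesis unfolding LHH_paths_def .
qed

lemma num_edges_pos_if_LHH_paths_pos:
  assumes "simple_graph V adj" and "degree_orientation V adj ori" and "0 < LHH_paths V adj ori"
  shows "0 < num_edges V adj"
proof (rule ccontr)
  assume "\<not> 0 < num_edges V adj"
  moreover have "finite (edges V adj)"
    using assms(1) finite_edges unfolding simple_graph_def by blast
  ultimately have "edges V adj = {}" unfolding num_edges_def by simp
  then have "\<not> ori u v" for u v
    using assms(1,2) unfolding simple_graph_def degree_orientation_def edges_def by blast
  then have "{(u, v, w). u \<in> low_nodes V adj \<and> v \<in> high_nodes V adj \<and> w \<in> high_nodes V adj \<and>
      u \<noteq> v \<and> v \<noteq> w \<and> u \<noteq> w \<and> ori u v \<and> ori v w} = {}"
    by auto
  then show False using assms(3) unfolding LHH_paths_def by (simp only: card.empty less_irrefl)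
qed

lemma card_high_arcs_deg_ge_le:
  assumes G: "simple_graph V adj" and O: "degree_orientation V adj ori"
    and m: "0 < num_edges V adj" and k: "1 \<le> k"
    and q: "0 \<le> q" "16 * real (card (four_cycles V adj)) \<le> q ^ 4"
  defines "\<mu> \<equiv> real (num_edges V adj) powr (1/3)"
  shows "real (card {p \<in> high_arcs V adj ori. k \<le> deg V adj (fst p)})
    \<le> 2 * real (num_edges V adj) / k * (3 * \<mu> + q)"
proof -
  define S where "S = {v \<in> high_nodes V adj. k \<le> deg V adj v}"
  define h where "h = real (card S)"
  have finite_V: "finite V" using G unfolding simple_graph_def by simp
  have SV: "S \<subseteq> V" unfolding S_def high_nodes_def by auto
  have ori_adj: "ori v w \<Longrightarrow> adj v w \<and> deg V adj v \<le> deg V adj w" for v w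
    using O unfolding degree_orientation_def by blast
  \<comment> \<open>arcs point towards higher degree, so both ends of an arc counted here lie in S\<close>
  have arcs: "{p \<in> high_arcs V adj ori. k \<le> deg V adj (fst p)} = {(v, w). v \<in> S \<and> w \<in> S \<and> ori v w}"
    unfolding high_arcs_def S_def using ori_adj by fastforce
  have "real (card {(v, w). v \<in> S \<and> w \<in> S \<and> ori v w}) \<le> h * (1 + sqrt h + q)"
    unfolding h_def
  proof (rule card_rel_le_by_rectangles)
    show "finite S" using SV finite_V by (rule finite_subset)
    show "real (card {(v, v', w, w'). v \<in> S \<and> v' \<in> S \<and> w \<in> S \<and> w' \<in> S \<and>
        v \<noteq> v' \<and> w \<noteq> w' \<and> ori v w \<and> ori v w' \<and> ori v' w \<and> ori v' w'}) \<le> q ^ 4"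
      using card_sub_rectangles_le_four_cycles[OF G SV, of ori] ori_adj q(2)
      by (simp flip: of_nat_le_iff)
  qed (rule q(1))
  also have "\<dots> \<le> 2 * real (num_edges V adj) / k * (3 * \<mu> + q)"
  proof (rule mult_mono)
    have "h * k \<le> 2 * real (num_edges V adj)"
      unfolding h_def using card_mult_le_twice_num_edges[OF G SV] by (simp add: S_def)
    then show "h \<le> 2 * real (num_edges V adj) / k" using k by (simp add: field_simps)
    have "h \<le> 2 * \<mu>\<^sup>2"
      using card_high_nodes_le[OF G m] card_mono[of "high_nodes V adj" S] finite_V
      unfolding h_def \<mu>_def S_def high_nodes_def by fastforce
    moreover have "(2 * \<mu>)\<^sup>2 = 4 * \<mu>\<^sup>2" by (simp add: power_mult_distrib)
    ultimately have "h \<le> (2 * \<mu>)\<^sup>2" using zero_le_power2[of \<mu>] by linarith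
    then have "sqrt h \<le> 2 * \<mu>" unfolding \<mu>_def by (intro real_le_lsqrt) auto
    moreover have "1 \<le> \<mu>" unfolding \<mu>_def using m by (simp add: ge_one_powr_ge_zero)
    ultimately show "1 + sqrt h + q \<le> 3 * \<mu> + q" by simp
  qed (use q in \<open>auto simp: h_def\<close>)
  finally show ?thesis unfolding arcs .
qed

lemma LHH_paths_le:
  assumes G: "simple_graph V adj" and O: "degree_orientation V adj ori"
    and "0 < num_edges V adj" and n: "2 \<le> card V"
    and q: "0 \<le> q" "16 * real (card (four_cycles V adj)) \<le> q ^ 4"
  defines "\<mu> \<equiv> real (num_edges V adj) powr (1/3)"
  shows "real (LHH_paths V adj ori)
    \<le> 4 * real (num_edges V adj) * log 2 (real (card V)) * (3 * \<mu> + q)"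
proof -
  let ?c = "2 * real (num_edges V adj) * (3 * \<mu> + q)"
  have finite_V: "finite V" using G unfolding simple_graph_def by simp
  have "(\<Sum>p \<in> high_arcs V adj ori. deg V adj (fst p))
      = (\<Sum>k = 1..card V. card {p \<in> high_arcs V adj ori. k \<le> deg V adj (fst p)})"
    by (rule sum_eq_sum_card_ge) (simp_all add: finite_high_arcs finite_V deg_le_card)
  then have "LHH_paths V adj ori
      \<le> (\<Sum>k = 1..card V. card {p \<in> high_arcs V adj ori. k \<le> deg V adj (fst p)})"
    using LHH_paths_le_sum_deg[OF G O] by simp
  then have "real (LHH_paths V adj ori)
      \<le> (\<Sum>k = 1..card V. real (card {p \<in> high_arcs V adj ori. k \<le> deg V adj (fst p)}))"
    by (simp flip: of_nat_sum of_nat_le_iff)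
  also have "\<dots> \<le> (\<Sum>k = 1..card V. ?c * inverse (real k))"
    using card_high_arcs_deg_ge_le[OF G O assms(3) _ q] unfolding \<mu>_def
    by (intro sum_mono) (simp add: field_simps)
  also have "\<dots> = ?c * harm (card V)" by (simp add: harm_def sum_distrib_left)
  also have "\<dots> \<le> ?c * (2 * log 2 (real (card V)))"
    using harm_le_twice_log2[OF n] q \<mu>_def by (intro mult_left_mono) auto
  finally show ?thesis by (simp add: mult_ac)
qed

theorem theorem2:
  fixes V :: "'a set" and adj ori :: "'a \<Rightarrow> 'a \<Rightarrow> bool"
  assumes "simple_graph V adj"
    and "degree_orientation V adj ori"
    and "real (LHH_paths V adj ori) >
           100 * real (num_edges V adj) powr (4/3) * (log 2 (real (card V)))\<^sup>2"
  shows "real (card (four_cycles V adj)) \<ge>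
           real (LHH_paths V adj ori) / (100 * (log 2 (real (card V)))\<^sup>2)"
proof (cases "card V \<le> 1")
  case True
  \<comment> \<open>then log n = 0 and the claimed bound is P / 0 = 0\<close>
  then have "log 2 (real (card V)) = 0" by (cases "card V") (auto simp: log_def)
  then show ?thesis by simp
next
  case False
  define m where "m = real (num_edges V adj)"
  define \<mu> where "\<mu> = m powr (1/3)"
  define L where "L = log 2 (real (card V))"
  define q where "q = sqrt (sqrt (16 * real (card (four_cycles V adj))))"
  have "0 < LHH_paths V adj ori"
    using assms(3) by (smt (verit) of_nat_0_less_iff mult_nonneg_nonneg powr_ge_zero zero_le_power2)
  then have m_pos: "0 < num_edges V adj"
    by (rule num_edges_pos_if_LHH_paths_pos[OF assms(1,2)])
  then have m_cube: "m = \<mu> ^ 3" and "m powr (4/3) = m * \<mu>"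
    unfolding \<mu>_def m_def by (simp_all add: powr_one_third_cube powr_four_thirds)
  have q4: "q ^ 4 = 16 * real (card (four_cycles V adj))"
    unfolding q_def by (simp add: sqrt_sqrt_power4)
  have "1 \<le> L" unfolding L_def using False by (subst le_log_iff) auto
  moreover have "real (LHH_paths V adj ori) \<le> 4 * m * L * (3 * \<mu> + q)"
    using LHH_paths_le[OF assms(1,2) m_pos] False q4 unfolding m_def \<mu>_def L_def q_def by simp
  moreover have "100 * (m * \<mu>) * L\<^sup>2 < real (LHH_paths V adj ori)"
    using assms(3) \<open>m powr (4/3) = m * \<mu>\<close> unfolding m_def L_def by simp
  ultimately show ?thesis
    using four_cycle_count_arith[of L \<mu> m] m_cube q4 unfolding \<mu>_def L_def by simp
qed

end
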